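(* Let $\mathsf{L}\in\{\mathbf{PD},\mathsf{InqL},\mathbf{PT}\}$. For every formula $\phi$ in the language of $\mathsf{L}$, every flat substitution $\sigma$ of $\mathsf{L}$ and every team $X$: $X\models\sigma(\phi)$ if and only if $X_\sigma\models\phi$.
   Context: Fix a countably infinite set Prop of propositional variables. A valuation is a function $v:\mathrm{Prop}\to\{0,1\}$; a team is a set of valuations. Formulas of $\mathbf{PT}$: $\phi::=p\mid\bot\mid\top\mid\,=\!(\phi_1,\dots,\phi_n,\phi)\mid\neg\phi\mid\phi\wedge\phi\mid\phi\otimes\phi\mid\phi\vee\phi\mid\phi\to\phi$. Satisfaction on a team $X$: $X\models p$ iff $v(p)=1$ for all $v\in X$; $X\models\bot$ iff $X=\emptyset$; $X\models\top$ always; $\wedge$ is conjunction of conditions; $X\models\phi\otimes\psi$ iff $X=Y\cup Z$ with $Y\models\phi$, $Z\models\psi$; $X\models\phi\vee\psi$ iff $X\models\phi$ or $X\models\psi$; $X\models\phi\to\psi$ iff every $Y\subseteq X$ with $Y\models\phi$ satisfies $\psi$; $X\models\neg\phi$ iff $\{v\}\not\models\phi$ for all $v\in X$; $X\models\,=\!(\phi_1,\dots,\phi_n,\psi)$ iff $X\models\bigwedge_i(\phi_i\vee(\phi_i\to\bot))\to(\psi\vee(\psi\to\bot))$. $\phi$ is flat if for all teams $X$: $X\models\phi$ iff $\{v\}\models\phi$ for all $v\in X$. Formulas of $\mathbf{PD}$: $\phi::=p\mid\bot\mid\top\mid\,=\!(\vec\alpha,\beta)\mid\neg\phi\mid\phi\wedge\phi\mid\phi\otimes\phi$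 with $\vec\alpha,\beta$ flat, evaluated by the same clauses, where for $\mathbf{PD}$ the dependence clause is: $X\models\,=\!(\vec\alpha,\beta)$ iff for all $v,v'\in X$, if $\{v\}\models\alpha_i\Leftrightarrow\{v'\}\models\alpha_i$ for all $i$, then $\{v\}\models\beta\Leftrightarrow\{v'\}\models\beta$. $\mathsf{InqL}$: formulas built from $p,\bot,\top$ by $\wedge,\vee,\to$ with the same clauses. A substitution of $\mathsf L$ is a map on $\mathsf L$-formulas commuting with all connectives and atoms; it is flat if each $\sigma(p)$ is flat. For a valuation $v$ and substitution $\sigma$, $v_\sigma$ is the valuation with $v_\sigma(p)=1$ if $\{v\}\models\sigma(p)$ and $v_\sigma(p)=0$ otherwise; for a team $X$, $X_\sigma=\{v_\sigma\mid v\in X\}$. *)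

theory Defs
  imports Main
begin

type_synonym valuation = "nat \<Rightarrow> bool"
type_synonym team = "valuation set"

datatype pt = PTAtom nat | PTBot | PTTop | PTDep "pt list" pt | PTNeg pt
  | PTAnd pt pt | PTTensor pt pt | PTOr pt pt | PTImp pt pt

(* X |= phi -> bot  iff every subteam satisfying phi is empty *)
fun pt_sat :: "team \<Rightarrow> pt \<Rightarrow> bool" where
  "pt_sat X (PTAtom p) = (\<forall>v\<in>X. v p)"
| "pt_sat X PTBot = (X = {})"
| "pt_sat X PTTop = True"
| "pt_sat X (PTDep as b) =
     (\<forall>Y\<subseteq>X. (\<forall>a\<in>set as. pt_sat Y a \<or> (\<forall>Z\<subseteq>Y. pt_sat Z a \<longrightarrow> Z = {}))
        \<longrightarrow> (pt_sat Y b \<or> (\<forall>Z\<subseteq>Y. pt_sat Z b \<longrightarrow> Z = {})))"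
| "pt_sat X (PTNeg f) = (\<forall>v\<in>X. \<not> pt_sat {v} f)"
| "pt_sat X (PTAnd f g) = (pt_sat X f \<and> pt_sat X g)"
| "pt_sat X (PTTensor f g) = (\<exists>Y Z. X = Y \<union> Z \<and> pt_sat Y f \<and> pt_sat Z g)"
| "pt_sat X (PTOr f g) = (pt_sat X f \<or> pt_sat X g)"
| "pt_sat X (PTImp f g) = (\<forall>Y\<subseteq>X. pt_sat Y f \<longrightarrow> pt_sat Y g)"

fun pt_subst :: "(nat \<Rightarrow> pt) \<Rightarrow> pt \<Rightarrow> pt" where
  "pt_subst s (PTAtom p) = s p"
| "pt_subst s PTBot = PTBot"
| "pt_subst s PTTop = PTTop"
| "pt_subst s (PTDep as b) = PTDep (map (pt_subst s) as) (pt_subst s b)"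
| "pt_subst s (PTNeg f) = PTNeg (pt_subst s f)"
| "pt_subst s (PTAnd f g) = PTAnd (pt_subst s f) (pt_subst s g)"
| "pt_subst s (PTTensor f g) = PTTensor (pt_subst s f) (pt_subst s g)"
| "pt_subst s (PTOr f g) = PTOr (pt_subst s f) (pt_subst s g)"
| "pt_subst s (PTImp f g) = PTImp (pt_subst s f) (pt_subst s g)"

definition pt_flat :: "pt \<Rightarrow> bool" where
  "pt_flat f \<longleftrightarrow> (\<forall>X. pt_sat X f \<longleftrightarrow> (\<forall>v\<in>X. pt_sat {v} f))"

datatype pd = PDAtom nat | PDBot | PDTop | PDDep "pd list" pd | PDNeg pd
  | PDAnd pd pd | PDTensor pd pd

fun pd_sat :: "team \<Rightarrow> pd \<Rightarrow> bool" where
  "pd_sat X (PDAtom p) = (\<forall>v\<in>X. v p)"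
| "pd_sat X PDBot = (X = {})"
| "pd_sat X PDTop = True"
| "pd_sat X (PDDep as b) =
     (\<forall>v\<in>X. \<forall>v'\<in>X. (\<forall>a\<in>set as. pd_sat {v} a \<longleftrightarrow> pd_sat {v'} a)
        \<longrightarrow> (pd_sat {v} b \<longleftrightarrow> pd_sat {v'} b))"
| "pd_sat X (PDNeg f) = (\<forall>v\<in>X. \<not> pd_sat {v} f)"
| "pd_sat X (PDAnd f g) = (pd_sat X f \<and> pd_sat X g)"
| "pd_sat X (PDTensor f g) = (\<exists>Y Z. X = Y \<union> Z \<and> pd_sat Y f \<and> pd_sat Z g)"

definition pd_flat :: "pd \<Rightarrow> bool" where
  "pd_flat f \<longleftrightarrow> (\<forall>X. pd_sat X f \<longleftrightarrow> (\<forall>v\<in>X. pd_sat {v} f))"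

fun pd_wf :: "pd \<Rightarrow> bool" where
  "pd_wf (PDDep as b) = ((\<forall>a\<in>set as. pd_wf a \<and> pd_flat a) \<and> pd_wf b \<and> pd_flat b)"
| "pd_wf (PDNeg f) = pd_wf f"
| "pd_wf (PDAnd f g) = (pd_wf f \<and> pd_wf g)"
| "pd_wf (PDTensor f g) = (pd_wf f \<and> pd_wf g)"
| "pd_wf _ = True"

fun pd_subst :: "(nat \<Rightarrow> pd) \<Rightarrow> pd \<Rightarrow> pd" where
  "pd_subst s (PDAtom p) = s p"
| "pd_subst s PDBot = PDBot"
| "pd_subst s PDTop = PDTop"
| "pd_subst s (PDDep as b) = PDDep (map (pd_subst s) as) (pd_subst s b)"
| "pd_subst s (PDNeg f) = PDNeg (pd_subst s f)"
| "pd_subst s (PDAnd f g) = PDAnd (pd_subst s f) (pd_subst s g)"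
| "pd_subst s (PDTensor f g) = PDTensor (pd_subst s f) (pd_subst s g)"

datatype inq = IAtom nat | IBot | ITop | IAnd inq inq | IOr inq inq | IImp inq inq

fun inq_sat :: "team \<Rightarrow> inq \<Rightarrow> bool" where
  "inq_sat X (IAtom p) = (\<forall>v\<in>X. v p)"
| "inq_sat X IBot = (X = {})"
| "inq_sat X ITop = True"
| "inq_sat X (IAnd f g) = (inq_sat X f \<and> inq_sat X g)"
| "inq_sat X (IOr f g) = (inq_sat X f \<or> inq_sat X g)"
| "inq_sat X (IImp f g) = (\<forall>Y\<subseteq>X. inq_sat Y f \<longrightarrow> inq_sat Y g)"

fun inq_subst :: "(nat \<Rightarrow> inq) \<Rightarrow> inq \<Rightarrow> inq" where
  "inq_subst s (IAtom p) = s p"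
| "inq_subst s IBot = IBot"
| "inq_subst s ITop = ITop"
| "inq_subst s (IAnd f g) = IAnd (inq_subst s f) (inq_subst s g)"
| "inq_subst s (IOr f g) = IOr (inq_subst s f) (inq_subst s g)"
| "inq_subst s (IImp f g) = IImp (inq_subst s f) (inq_subst s g)"

definition inq_flat :: "inq \<Rightarrow> bool" where
  "inq_flat f \<longleftrightarrow> (\<forall>X. inq_sat X f \<longleftrightarrow> (\<forall>v\<in>X. inq_sat {v} f))"

definition val_subst :: "(team \<Rightarrow> 'f \<Rightarrow> bool) \<Rightarrow> (nat \<Rightarrow> 'f) \<Rightarrow> valuation \<Rightarrow> valuation" where
  "val_subst sat s v = (\<lambda>p. sat {v} (s p))"

definition team_subst :: "(team \<Rightarrow> 'f \<Rightarrow> bool) \<Rightarrow> (nat \<Rightarrow> 'f) \<Rightarrow> team \<Rightarrow> team" where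
  "team_subst sat s X = val_subst sat s ` X"

end

theory Submission
  imports Defs
begin

text \<open>A flat substitution acts on a team through the map \<open>v \<mapsto> v\<^sub>\<sigma>\<close>: on atoms,
  \<open>X \<Turnstile> \<sigma>(p)\<close> iff every \<open>v\<^sub>\<sigma>\<close> with \<open>v \<in> X\<close> makes \<open>p\<close> true. The claim then follows by
  induction on \<open>\<phi>\<close> for an arbitrary map \<open>f\<close> on valuations with this property: every
  connective quantifies over subteams or splittings of the team, and subteams and
  splittings of \<open>f ` X\<close> are exactly the images of subteams and splittings of \<open>X\<close>.\<close>

lemma all_subset_image_iff: "(\<forall>Y\<subseteq>f ` X. P Y) \<longleftrightarrow> (\<forall>Y\<subseteq>X. P (f ` Y))"
  by (metis subset_image_iff)

lemma image_Int_vimage_of_subset: "Y \<subseteq> f ` X \<Longrightarrow> f ` (X \<inter> f -` Y) = Y"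
  by auto

lemma ex_Un_image_iff:
  "(\<exists>Y Z. f ` X = Y \<union> Z \<and> P Y \<and> Q Z) \<longleftrightarrow> (\<exists>Y Z. X = Y \<union> Z \<and> P (f ` Y) \<and> Q (f ` Z))"
proof
  assume "\<exists>Y Z. f ` X = Y \<union> Z \<and> P Y \<and> Q Z"
  then obtain Y Z where split: "f ` X = Y \<union> Z" and "P Y" "Q Z" by blast
  moreover have "f ` (X \<inter> f -` Y) = Y" "f ` (X \<inter> f -` Z) = Z"
    using split by (simp_all add: image_Int_vimage_of_subset)
  moreover have "X = (X \<inter> f -` Y) \<union> (X \<inter> f -` Z)"
    using split by auto
  ultimately show "\<exists>Y Z. X = Y \<union> Z \<and> P (f ` Y) \<and> Q (f ` Z)" by metis
qed (metis image_Un)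

lemma sat_atom_iff_val_subst:
  assumes "\<forall>X. sat X (s p) \<longleftrightarrow> (\<forall>v\<in>X. sat {v} (s p))"
  shows "sat X (s p) \<longleftrightarrow> (\<forall>v\<in>X. val_subst sat s v p)"
  using assms unfolding val_subst_def by blast

lemma pt_sat_subst_image:
  assumes atom: "\<And>X p. pt_sat X (s p) \<longleftrightarrow> (\<forall>v\<in>X. f v p)"
  shows "pt_sat X (pt_subst s \<phi>) \<longleftrightarrow> pt_sat (f ` X) \<phi>"
  by (induction \<phi> arbitrary: X)
    (simp_all add: atom all_subset_image_iff ex_Un_image_iff)

lemma inq_sat_subst_image:
  assumes atom: "\<And>X p. inq_sat X (s p) \<longleftrightarrow> (\<forall>v\<in>X. f v p)"
  shows "inq_sat X (inq_subst s \<phi>) \<longleftrightarrow> inq_sat (f ` X) \<phi>"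
  by (induction \<phi> arbitrary: X) (simp_all add: atom all_subset_image_iff)

lemma pd_sat_subst_image:
  assumes atom: "\<And>X p. pd_sat X (s p) \<longleftrightarrow> (\<forall>v\<in>X. f v p)"
  shows "pd_sat X (pd_subst s \<phi>) \<longleftrightarrow> pd_sat (f ` X) \<phi>"
proof (induction \<phi> arbitrary: X)
  case (PDDep as b)
  then have "\<And>v a. a \<in> set as \<Longrightarrow> pd_sat {v} (pd_subst s a) \<longleftrightarrow> pd_sat {f v} a"
    and "\<And>v. pd_sat {v} (pd_subst s b) \<longleftrightarrow> pd_sat {f v} b"
    by (metis image_empty image_insert)+
  then show ?case by simp
next
  case (PDNeg g)
  then have "\<And>v. pd_sat {v} (pd_subst s g) \<longleftrightarrow> pd_sat {f v} g"
    by (metis image_empty image_insert)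
  then show ?case by simp
qed (simp_all add: atom ex_Un_image_iff)

theorem lemma3p5:
  shows "(\<forall>(\<phi>::pd) s X. pd_wf \<phi> \<and> (\<forall>p. pd_wf (s p) \<and> pd_flat (s p)) \<longrightarrow>
            (pd_sat X (pd_subst s \<phi>) \<longleftrightarrow> pd_sat (team_subst pd_sat s X) \<phi>))
       \<and> (\<forall>(\<phi>::inq) s X. (\<forall>p. inq_flat (s p)) \<longrightarrow>
            (inq_sat X (inq_subst s \<phi>) \<longleftrightarrow> inq_sat (team_subst inq_sat s X) \<phi>))
       \<and> (\<forall>(\<phi>::pt) s X. (\<forall>p. pt_flat (s p)) \<longrightarrow>
            (pt_sat X (pt_subst s \<phi>) \<longleftrightarrow> pt_sat (team_subst pt_sat s X) \<phi>))"
proof (intro conjI allI impI)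
  fix \<phi> :: pd and s :: "nat \<Rightarrow> pd" and X
  assume "pd_wf \<phi> \<and> (\<forall>p. pd_wf (s p) \<and> pd_flat (s p))"
  then have "\<And>X p. pd_sat X (s p) \<longleftrightarrow> (\<forall>v\<in>X. val_subst pd_sat s v p)"
    by (metis sat_atom_iff_val_subst pd_flat_def)
  then show "pd_sat X (pd_subst s \<phi>) \<longleftrightarrow> pd_sat (team_subst pd_sat s X) \<phi>"
    unfolding team_subst_def by (rule pd_sat_subst_image)
next
  fix \<phi> :: inq and s :: "nat \<Rightarrow> inq" and X
  assume "\<forall>p. inq_flat (s p)"
  then have "\<And>X p. inq_sat X (s p) \<longleftrightarrow> (\<forall>v\<in>X. val_subst inq_sat s v p)"
    by (metis sat_atom_iff_val_subst inq_flat_def)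
  then show "inq_sat X (inq_subst s \<phi>) \<longleftrightarrow> inq_sat (team_subst inq_sat s X) \<phi>"
    unfolding team_subst_def by (rule inq_sat_subst_image)
next
  fix \<phi> :: pt and s :: "nat \<Rightarrow> pt" and X
  assume "\<forall>p. pt_flat (s p)"
  then have "\<And>X p. pt_sat X (s p) \<longleftrightarrow> (\<forall>v\<in>X. val_subst pt_sat s v p)"
    by (metis sat_atom_iff_val_subst pt_flat_def)
  then show "pt_sat X (pt_subst s \<phi>) \<longleftrightarrow> pt_sat (team_subst pt_sat s X) \<phi>"
    unfolding team_subst_def by (rule pt_sat_subst_image)
qed

end
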